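(* The map $a\mapsto(a,\,a\bar a^* )$ induces an isomorphism of algebraic groups over $\mathbf Q$ $$E_0^\times/F^\times\;\xrightarrow{\ \sim\ }\;H_{\mathbf z}.$$
   Context: $D_0$ is a definite quaternion algebra over $\mathbf Q$ with main involution $*$; $F=\mathbf Q(\sqrt{d_F})$ is a quadratic étale algebra ($d_F$ a square-free positive integer, with $d_F=1$ meaning $F=\mathbf Q\oplus\mathbf Q$) with nontrivial automorphism $x\mapsto\bar x$; $D=D_0\otimes_{\mathbf Q}F$ with $*$ and $\bar{\ }$ extended; $V=\{x\in D:\bar x^*=x\}$; $H(\mathbf Q)=(D^\times\times\mathbf Q^\times)/\{(a,N_{F/\mathbf Q}(a)):a\in F^\times\}$ acts on $V$ by $\varrho(a,\alpha)x=\alpha^{-1}ax\bar a^*$, with similitude $\nu=\alpha^{-2}N_{F/\mathbf Q}(aa^* )$, and $H^{(1)}=\ker\nu$. $M=\mathbf Q(\sqrt{-d_M})$ is an imaginary quadratic field ($d_M$ square-free positive) with an embedding $\iota:M\hookrightarrow D_0$. $K=\mathbf Q(\sqrt{-d_Md_F})$, embedded in $V$ by $\iota(\sqrt{-d_Md_F})=\iota(\sqrt{-d_M})\otimes\sqrt{d_F}$. With $-d_K$ the square-free integer such that $K=\mathbf Q(\sqrt{-d_K})$, put $\delta=\sqrt{-d_K}$ if $-d_K\not\equiv1\pmod 4$ and $\delta=\frac{1+\sqrt{-d_K}}{2}$ otherwise; $\mathbf z=(1,\iota(\delta))\in V\oplus V$. $E=F\cdot\iota(M)\subset D$ (the subalgebra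 generated by $F$ and $\iota(M)$), $N_{E/K}(a)=a\bar a^*$, $E_0=\{a\in E:a\bar a^*\in\mathbf Q\}$ (as an algebraic group, $E_0^\times$ is the group of units $a$ of $E$ with $a\bar a^*$ in $\mathbf G_m$), and $H_{\mathbf z}=\{h\in H^{(1)}:\varrho(h)\mathbf z=\mathbf z\}$ with $\varrho$ acting componentwise. *)

theory Defs
  imports Complex_Main "HOL-Algebra.Coset" "HOL-Computational_Algebra.Squarefree"
begin

section \<open>Quaternion algebra (A,B)_k with basis 1, i, j, ij; i^2 = A, j^2 = B, ij = -ji\<close>

datatype 'k quat = Q 'k 'k 'k 'k

fun qmul :: "'k::comm_ring_1 \<Rightarrow> 'k \<Rightarrow> 'k quat \<Rightarrow> 'k quat \<Rightarrow> 'k quat" where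
  "qmul A B (Q x0 x1 x2 x3) (Q y0 y1 y2 y3) =
     Q (x0*y0 + A*x1*y1 + B*x2*y2 - A*B*x3*y3)
       (x0*y1 + x1*y0 - B*x2*y3 + B*x3*y2)
       (x0*y2 + x2*y0 + A*x1*y3 - A*x3*y1)
       (x0*y3 + x3*y0 + x1*y2 - x2*y1)"

fun qadd :: "'k::comm_ring_1 quat \<Rightarrow> 'k quat \<Rightarrow> 'k quat" where
  "qadd (Q x0 x1 x2 x3) (Q y0 y1 y2 y3) = Q (x0+y0) (x1+y1) (x2+y2) (x3+y3)"

fun qsmul :: "'k::comm_ring_1 \<Rightarrow> 'k quat \<Rightarrow> 'k quat" where
  "qsmul c (Q x0 x1 x2 x3) = Q (c*x0) (c*x1) (c*x2) (c*x3)"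

fun qconj :: "'k::comm_ring_1 quat \<Rightarrow> 'k quat" where
  "qconj (Q x0 x1 x2 x3) = Q x0 (-x1) (-x2) (-x3)"

definition qscal :: "'k::comm_ring_1 \<Rightarrow> 'k quat" where
  "qscal c = Q c 0 0 0"

fun qcoef0 :: "'k quat \<Rightarrow> 'k" where
  "qcoef0 (Q x0 x1 x2 x3) = x0"

fun qmap :: "rat quat \<Rightarrow> 'k::field_char_0 quat" where
  "qmap (Q x0 x1 x2 x3) = Q (of_rat x0) (of_rat x1) (of_rat x2) (of_rat x3)"

section \<open>D = D_0 \<otimes> F over k: pairs (p,q) standing for p + q s, s = sqrt d_F central\<close>

type_synonym 'k delt = "'k quat \<times> 'k quat"

fun dmul :: "'k::comm_ring_1 \<Rightarrow> 'k \<Rightarrow> 'k \<Rightarrow> 'k delt \<Rightarrow> 'k delt \<Rightarrow> 'k delt" where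
  "dmul A B dF (p1, q1) (p2, q2) =
     (qadd (qmul A B p1 p2) (qsmul dF (qmul A B q1 q2)),
      qadd (qmul A B p1 q2) (qmul A B q1 p2))"

definition done_D :: "'k::comm_ring_1 delt" where
  "done_D = (qscal 1, qscal 0)"

text \<open>the involution * (extended F-linearly) and the automorphism bar (extended D_0-linearly)\<close>
fun dstar :: "'k::comm_ring_1 delt \<Rightarrow> 'k delt" where
  "dstar (p, q) = (qconj p, qconj q)"

fun dbar :: "'k::comm_ring_1 delt \<Rightarrow> 'k delt" where
  "dbar (p, q) = (p, qsmul (-1) q)"

fun dsmul :: "'k::comm_ring_1 \<Rightarrow> 'k delt \<Rightarrow> 'k delt" where
  "dsmul c (p, q) = (qsmul c p, qsmul c q)"

text \<open>the element x + y s of F \<otimes> k, viewed inside D \<otimes> k\<close>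
definition felt :: "'k::comm_ring_1 \<Rightarrow> 'k \<Rightarrow> 'k delt" where
  "felt x y = (qscal x, qscal y)"

text \<open>N_{F/Q} of an element of D lying in F \<otimes> k (read off its F-coordinates)\<close>
fun fnorm :: "'k::comm_ring_1 \<Rightarrow> 'k delt \<Rightarrow> 'k" where
  "fnorm dF (p, q) = (qcoef0 p)^2 - dF * (qcoef0 q)^2"

section \<open>k-points of the groups, for a field k of characteristic 0\<close>

text \<open>Parameters: A, B :: rat with D_0 = (A,B)_Q; dF; dM; mu :: rat quat = iota(sqrt(-dM)).\<close>

definition Dunits :: "rat \<Rightarrow> rat \<Rightarrow> nat \<Rightarrow> 'k::field_char_0 delt set" where
  "Dunits A B dF = {x. \<exists>y. dmul (of_rat A) (of_rat B) (of_nat dF) x y = done_D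
                          \<and> dmul (of_rat A) (of_rat B) (of_nat dF) y x = done_D}"

definition Dgrp :: "rat \<Rightarrow> rat \<Rightarrow> nat \<Rightarrow> 'k::field_char_0 delt monoid" where
  "Dgrp A B dF = \<lparr>carrier = Dunits A B dF,
                  monoid.mult = dmul (of_rat A) (of_rat B) (of_nat dF), monoid.one = done_D\<rparr>"

definition Gm :: "'k::field_char_0 monoid" where
  "Gm = \<lparr>carrier = {x. x \<noteq> 0}, monoid.mult = (*), monoid.one = 1\<rparr>"

definition Funits :: "nat \<Rightarrow> 'k::field_char_0 delt set" where
  "Funits dF = {felt x y | x y. x^2 - of_nat dF * y^2 \<noteq> 0}"

definition Hsub :: "nat \<Rightarrow> ('k::field_char_0 delt \<times> 'k) set" where
  "Hsub dF = {(felt x y, x^2 - of_nat dF * y^2) | x y. x^2 - of_nat dF * y^2 \<noteq> 0}"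

definition Hpre :: "rat \<Rightarrow> rat \<Rightarrow> nat \<Rightarrow> ('k::field_char_0 delt \<times> 'k) monoid" where
  "Hpre A B dF = Dgrp A B dF \<times>\<times> Gm"

definition Hgrp :: "rat \<Rightarrow> rat \<Rightarrow> nat \<Rightarrow> ('k::field_char_0 delt \<times> 'k) set monoid" where
  "Hgrp A B dF = Hpre A B dF Mod Hsub dF"

fun rho :: "rat \<Rightarrow> rat \<Rightarrow> nat \<Rightarrow> 'k::field_char_0 delt \<times> 'k \<Rightarrow> 'k delt \<Rightarrow> 'k delt" where
  "rho A B dF (a, \<alpha>) x =
     dsmul (inverse \<alpha>) (dmul (of_rat A) (of_rat B) (of_nat dF) a
        (dmul (of_rat A) (of_rat B) (of_nat dF) x (dstar (dbar a))))"

fun nu :: "rat \<Rightarrow> rat \<Rightarrow> nat \<Rightarrow> 'k::field_char_0 delt \<times> 'k \<Rightarrow> 'k" where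
  "nu A B dF (a, \<alpha>) =
     fnorm (of_nat dF) (dmul (of_rat A) (of_rat B) (of_nat dF) a (dstar a)) / \<alpha>^2"

text \<open>d_K: -d_K is the square-free part of -d_M d_F\<close>
definition gK :: "nat \<Rightarrow> nat \<Rightarrow> nat" where
  "gK dM dF = gcd dM dF"

definition dK :: "nat \<Rightarrow> nat \<Rightarrow> nat" where
  "dK dM dF = dM * dF div (gK dM dF)^2"

text \<open>iota(delta) in V, where iota(sqrt(-d_M d_F)) = iota(sqrt(-d_M)) \<otimes> sqrt(d_F) = (0, mu)
  and sqrt(-d_K) = sqrt(-d_M d_F) / gK\<close>
definition iota_delta :: "nat \<Rightarrow> nat \<Rightarrow> rat quat \<Rightarrow> 'k::field_char_0 delt" where
  "iota_delta dM dF mu =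
     (let s = (qscal 0, qsmul (inverse (of_nat (gK dM dF))) (qmap mu)) in
      if (- int (dK dM dF)) mod 4 = 1
      then (qadd (qscal (1/2)) (fst s), qsmul (1/2) (snd s))
      else s)"

text \<open>H_z(k): classes in H^{(1)}(k) fixing z = (1, iota(delta)) (rho and nu are constant on classes)\<close>
definition Hz :: "rat \<Rightarrow> rat \<Rightarrow> nat \<Rightarrow> nat \<Rightarrow> rat quat \<Rightarrow> ('k::field_char_0 delt \<times> 'k) set set" where
  "Hz A B dF dM mu = {C \<in> carrier (Hgrp A B dF).
      \<forall>h\<in>C. nu A B dF h = 1 \<and> rho A B dF h done_D = done_D
             \<and> rho A B dF h (iota_delta dM dF mu) = iota_delta dM dF mu}"

definition Hzgrp :: "rat \<Rightarrow> rat \<Rightarrow> nat \<Rightarrow> nat \<Rightarrow> rat quat \<Rightarrow> ('k::field_char_0 delt \<times> 'k) set monoid" where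
  "Hzgrp A B dF dM mu = (Hgrp A B dF) \<lparr>carrier := Hz A B dF dM mu\<rparr>"

text \<open>E(k) = F \<cdot> iota(M) \<otimes> k = {(x + y mu) + (z + w mu) s}\<close>
definition Eset :: "nat \<Rightarrow> rat quat \<Rightarrow> 'k::field_char_0 delt set" where
  "Eset dF mu = {(qadd (qscal x) (qsmul y (qmap mu)), qadd (qscal z) (qsmul w (qmap mu))) | x y z w. True}"

text \<open>a (bar a)^* = N_{E/K}(a)\<close>
definition NEK :: "rat \<Rightarrow> rat \<Rightarrow> nat \<Rightarrow> 'k::field_char_0 delt \<Rightarrow> 'k delt" where
  "NEK A B dF e = dmul (of_rat A) (of_rat B) (of_nat dF) e (dstar (dbar e))"

definition E0units :: "rat \<Rightarrow> rat \<Rightarrow> nat \<Rightarrow> rat quat \<Rightarrow> 'k::field_char_0 delt set" where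
  "E0units A B dF mu = {e \<in> Eset dF mu.
      (\<exists>e' \<in> Eset dF mu. dmul (of_rat A) (of_rat B) (of_nat dF) e e' = done_D
                        \<and> dmul (of_rat A) (of_rat B) (of_nat dF) e' e = done_D)
      \<and> (\<exists>t. t \<noteq> 0 \<and> NEK A B dF e = felt t 0)}"

definition E0grp :: "rat \<Rightarrow> rat \<Rightarrow> nat \<Rightarrow> rat quat \<Rightarrow> 'k::field_char_0 delt monoid" where
  "E0grp A B dF mu = \<lparr>carrier = E0units A B dF mu,
                      monoid.mult = dmul (of_rat A) (of_rat B) (of_nat dF), monoid.one = done_D\<rparr>"

definition phiH :: "rat \<Rightarrow> rat \<Rightarrow> nat \<Rightarrow> 'k::field_char_0 delt \<Rightarrow> ('k delt \<times> 'k) set" where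
  "phiH A B dF e = Hsub dF #>\<^bsub>Hpre A B dF\<^esub> (e, qcoef0 (fst (NEK A B dF e)))"

end

theory Submission
  imports Defs
begin

text \<open>
  A class in \<open>H\<^sub>z\<close> is represented by a pair \<open>(a, \<alpha>)\<close>. It fixes \<open>1\<close> iff \<open>a (bar a)\<^sup>* = \<alpha>\<close>;
  then \<open>(bar a)\<^sup>* = \<alpha> a\<^sup>-\<^sup>1\<close>, so \<open>\<rho>(a, \<alpha>)\<close> is conjugation by \<open>a\<close>, and fixing
  \<open>\<iota>(\<delta>) = c + c' \<iota>(\<surd>-d\<^sub>M) \<surd>d\<^sub>F\<close> (with \<open>c' \<noteq> 0\<close>) means commuting with it. The centralizer
  of this element in \<open>D\<close> is \<open>E\<close>, so \<open>H\<^sub>z\<close> consists exactly of the classes of \<open>(a, a (bar a)\<^sup>*)\<close>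
  with \<open>a \<in> E\<^sub>0\<^sup>\<times>\<close>, for which \<open>\<nu> = 1\<close> holds automatically. Thus \<open>a \<mapsto> (a, a (bar a)\<^sup>*)\<close> is a
  homomorphism from \<open>E\<^sub>0\<^sup>\<times>\<close> onto \<open>H\<^sub>z\<close>; its kernel consists of the \<open>a\<close> whose pair lies in
  \<open>{(f, N(f)) : f \<in> F\<^sup>\<times>}\<close>, i.e. it is \<open>F\<^sup>\<times>\<close>, and the first isomorphism theorem applies.
\<close>

section \<open>Arithmetic in \<open>D\<close>\<close>

lemma delt_cases: obtains x0 x1 x2 x3 y0 y1 y2 y3 where "x = (Q x0 x1 x2 x3, Q y0 y1 y2 y3)"
  by (metis quat.exhaust surj_pair)

lemma dmul_assoc: "dmul a b d (dmul a b d x y) z = dmul a b d x (dmul a b d y z)"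
  by (rule delt_cases[of x], rule delt_cases[of y], rule delt_cases[of z]) (simp add: algebra_simps)

lemma dmul_one_left [simp]: "dmul a b d done_D x = x"
  and dmul_one_right [simp]: "dmul a b d x done_D = x"
  by (rule delt_cases[of x], simp add: done_D_def qscal_def)+

lemma dstar_dmul: "dstar (dmul a b d x y) = dmul a b d (dstar y) (dstar x)"
  by (rule delt_cases[of x], rule delt_cases[of y]) (simp add: algebra_simps)

lemma dbar_dmul: "dbar (dmul a b d x y) = dmul a b d (dbar x) (dbar y)"
  by (rule delt_cases[of x], rule delt_cases[of y]) (simp add: algebra_simps)

lemma dmul_dsmul_right: "dmul a b d x (dsmul c y) = dsmul c (dmul a b d x y)"
  by (rule delt_cases[of x], rule delt_cases[of y]) (simp add: algebra_simps)

lemma dsmul_dsmul [simp]: "dsmul c (dsmul c' x) = dsmul (c * c') x"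
  by (rule delt_cases[of x]) (simp add: algebra_simps)

lemma dsmul_one [simp]: "dsmul 1 x = x"
  by (rule delt_cases[of x]) simp

lemma felt_commute: "dmul a b d (felt u v) x = dmul a b d x (felt u v)"
  by (rule delt_cases[of x]) (simp add: felt_def qscal_def algebra_simps)

lemma dmul_felt_scalar: "dmul a b d (felt u 0) x = dsmul u x"
  by (rule delt_cases[of x]) (simp add: felt_def qscal_def algebra_simps)

lemma felt_mult: "dmul a b d (felt u v) (felt u' v') = felt (u*u' + d*v*v') (u*v' + v*u')"
  by (simp add: felt_def qscal_def algebra_simps)

lemma felt_eq_iff [simp]: "felt x y = felt x' y' \<longleftrightarrow> x = x' \<and> y = y'"
  by (simp add: felt_def qscal_def)

lemma dsmul_felt: "dsmul c (felt u v) = felt (c*u) (c*v)"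
  by (simp add: felt_def qscal_def)

lemma felt_one: "felt 1 0 = done_D"
  by (simp add: felt_def done_D_def)

lemma brahmagupta_identity:
  "(x*x' + d*y*y')^2 - d * (x*y' + y*x')^2 = (x^2 - d*y^2) * (x'^2 - d*y'^2)"
  for x y x' y' d :: "'k::comm_ring_1"
  by (simp add: algebra_simps power2_eq_square)

section \<open>The subalgebra \<open>E\<close> and its centralizing property\<close>

lemma pure_quat_cases:
  assumes "qcoef0 \<mu> = 0"
  obtains m1 m2 m3 where "\<mu> = Q 0 m1 m2 m3"
  using assms by (cases \<mu>) simp

lemma pure_quat_square:
  "qmul a b (Q 0 m1 m2 m3) (Q 0 m1 m2 m3) = qscal (- m) \<longleftrightarrow> a*m1^2 + b*m2^2 - a*b*m3^2 = - m"
  by (simp add: qscal_def power2_eq_square algebra_simps)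

text \<open>\<open>eelt \<mu> x y z w\<close> is the element \<open>(x + y\<mu>) + (z + w\<mu>)\<surd>d\<^sub>F\<close> of \<open>E = F\<cdot>\<iota>(M)\<close>.\<close>
definition eelt :: "'k::comm_ring_1 quat \<Rightarrow> 'k \<Rightarrow> 'k \<Rightarrow> 'k \<Rightarrow> 'k \<Rightarrow> 'k delt" where
  "eelt \<mu> x y z w = (qadd (qscal x) (qsmul y \<mu>), qadd (qscal z) (qsmul w \<mu>))"

lemma eelt_pure: "eelt (Q 0 m1 m2 m3) x y z w = (Q x (y*m1) (y*m2) (y*m3), Q z (w*m1) (w*m2) (w*m3))"
  by (simp add: eelt_def qscal_def)

lemma eelt_mult:
  fixes a b d m :: "'k::comm_ring_1"
  assumes "qcoef0 \<mu> = 0" "qmul a b \<mu> \<mu> = qscal (- m)"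
  shows "dmul a b d (eelt \<mu> x y z w) (eelt \<mu> x' y' z' w') =
     eelt \<mu> (x*x' - m*y*y' + d*(z*z' - m*w*w')) (x*y' + y*x' + d*(z*w' + w*z'))
        (x*z' + z*x' - m*(y*w' + w*y')) (x*w' + y*z' + z*y' + w*x')"
proof -
  obtain m1 m2 m3 where \<mu>: "\<mu> = Q 0 m1 m2 m3" using assms(1) by (rule pure_quat_cases)
  have m: "m = -(a*m1^2 + b*m2^2 - a*b*m3^2)"
    using assms(2) unfolding \<mu> pure_quat_square by (simp add: algebra_simps)
  show ?thesis unfolding \<mu> eelt_pure m by (simp add: algebra_simps power2_eq_square)
qed

lemma eelt_commute:
  fixes a b d m :: "'k::comm_ring_1"
  assumes "qcoef0 \<mu> = 0" "qmul a b \<mu> \<mu> = qscal (- m)"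
  shows "dmul a b d (eelt \<mu> x y z w) (eelt \<mu> x' y' z' w') = dmul a b d (eelt \<mu> x' y' z' w') (eelt \<mu> x y z w)"
  unfolding eelt_mult[OF assms] by (simp add: algebra_simps)

lemma eelt_eq_iff:
  fixes \<mu> :: "'k::field quat"
  assumes "qcoef0 \<mu> = 0" "\<mu> \<noteq> qscal 0"
  shows "eelt \<mu> x y z w = eelt \<mu> x' y' z' w' \<longleftrightarrow> x = x' \<and> y = y' \<and> z = z' \<and> w = w'"
  using assms by (cases \<mu>) (auto simp: eelt_pure qscal_def)

lemma dstar_eelt: "qcoef0 \<mu> = 0 \<Longrightarrow> dstar (eelt \<mu> x y z w) = eelt \<mu> x (-y) z (-w)"
  and dbar_eelt: "qcoef0 \<mu> = 0 \<Longrightarrow> dbar (eelt \<mu> x y z w) = eelt \<mu> x y (-z) (-w)"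
  and dsmul_eelt: "qcoef0 \<mu> = 0 \<Longrightarrow> dsmul c (eelt \<mu> x y z w) = eelt \<mu> (c*x) (c*y) (c*z) (c*w)"
  and felt_eq_eelt: "qcoef0 \<mu> = 0 \<Longrightarrow> felt u v = eelt \<mu> u 0 v 0"
  by (auto elim: pure_quat_cases simp: eelt_pure felt_def qscal_def algebra_simps)

lemma eelt_mult_dstar_dbar:
  fixes a b d m :: "'k::comm_ring_1"
  assumes "qcoef0 \<mu> = 0" "qmul a b \<mu> \<mu> = qscal (- m)"
  shows "dmul a b d (eelt \<mu> x y z w) (dstar (dbar (eelt \<mu> x y z w)))
     = eelt \<mu> (x^2 + m*y^2 - d*(z^2 + m*w^2)) 0 0 (2*(x*w - y*z))"
  unfolding dbar_eelt[OF assms(1)] dstar_eelt[OF assms(1)] eelt_mult[OF assms]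
  by (simp add: algebra_simps power2_eq_square)

lemma fnorm_eelt_mult_dstar:
  fixes a b d m :: "'k::comm_ring_1"
  assumes "qcoef0 \<mu> = 0" "qmul a b \<mu> \<mu> = qscal (- m)"
  shows "fnorm d (dmul a b d (eelt \<mu> x y z w) (dstar (eelt \<mu> x y z w)))
     = (x^2 + m*y^2 - d*(z^2 + m*w^2))^2 + 4*d*m*(x*w - y*z)^2"
proof -
  obtain m1 m2 m3 where \<mu>: "\<mu> = Q 0 m1 m2 m3" using assms(1) by (rule pure_quat_cases)
  show ?thesis
    unfolding dstar_eelt[OF assms(1)] eelt_mult[OF assms] by (simp add: \<mu> eelt_pure algebra_simps power2_eq_square)
qed

lemma pure_quat_centralizer:
  fixes a b :: "'k::field_char_0"
  assumes "a \<noteq> 0" "b \<noteq> 0" "qcoef0 \<mu> = 0" "\<mu> \<noteq> qscal 0"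
    and "qmul a b p \<mu> = qmul a b \<mu> p"
  shows "\<exists>x y. p = qadd (qscal x) (qsmul y \<mu>)"
proof -
  obtain m1 m2 m3 where \<mu>: "\<mu> = Q 0 m1 m2 m3" using assms(3) by (rule pure_quat_cases)
  obtain p0 p1 p2 p3 where p: "p = Q p0 p1 p2 p3" by (cases p)
  \<comment> \<open>the coordinates of \<open>p\<mu> - \<mu>p\<close> are \<open>2b\<close>, \<open>2a\<close>, \<open>2\<close> times those of the cross product of the vector parts\<close>
  have cross: "m2 * p3 = m3 * p2" "m3 * p1 = m1 * p3" "m2 * p1 = m1 * p2"
    using assms(1,2,5) unfolding \<mu> p by (auto simp: algebra_simps)
  have "p = qadd (qscal p0) (qsmul (p1/m1) \<mu>)" if "m1 \<noteq> 0"
    using that cross by (simp add: \<mu> p qscal_def field_simps)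
  moreover have "p = qadd (qscal p0) (qsmul (p2/m2) \<mu>)" if "m2 \<noteq> 0"
    using that cross by (simp add: \<mu> p qscal_def field_simps)
  moreover have "p = qadd (qscal p0) (qsmul (p3/m3) \<mu>)" if "m3 \<noteq> 0"
    using that cross by (simp add: \<mu> p qscal_def field_simps)
  moreover have "m1 \<noteq> 0 \<or> m2 \<noteq> 0 \<or> m3 \<noteq> 0" using assms(4) \<mu> by (auto simp: qscal_def)
  ultimately show ?thesis by blast
qed

lemma eelt_centralizer:
  fixes a b d c c' :: "'k::field_char_0"
  assumes "a \<noteq> 0" "b \<noteq> 0" "d \<noteq> 0" "c' \<noteq> 0" "qcoef0 \<mu> = 0" "\<mu> \<noteq> qscal 0"
    and "dmul a b d x (eelt \<mu> c 0 0 c') = dmul a b d (eelt \<mu> c 0 0 c') x"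
  shows "\<exists>x0 y0 z0 w0. x = eelt \<mu> x0 y0 z0 w0"
proof -
  obtain p q where x: "x = (p, q)" by (cases x)
  obtain p0 p1 p2 p3 q0 q1 q2 q3 where pq: "p = Q p0 p1 p2 p3" "q = Q q0 q1 q2 q3" by (meson quat.exhaust)
  obtain m1 m2 m3 where \<mu>: "\<mu> = Q 0 m1 m2 m3" using assms(5) by (rule pure_quat_cases)
  have "qmul a b p \<mu> = qmul a b \<mu> p" "qmul a b q \<mu> = qmul a b \<mu> q"
    using assms(3,4,7) unfolding x \<mu> pq by (simp_all add: eelt_pure algebra_simps)
  then show ?thesis
    using pure_quat_centralizer[OF assms(1,2,5,6)] unfolding x eelt_def by blast
qed

section \<open>The groups\<close>

lemma (in group) subgroup_by_inverse_witness:
  assumes "H \<subseteq> carrier G" "H \<noteq> {}"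
    and "\<And>a. a \<in> H \<Longrightarrow> \<exists>b \<in> H. b \<otimes> a = \<one>"
    and "\<And>a b. a \<in> H \<Longrightarrow> b \<in> H \<Longrightarrow> a \<otimes> b \<in> H"
  shows "subgroup H G"
proof (rule subgroupI)
  fix a assume "a \<in> H"
  then obtain b where "b \<in> H" "b \<otimes> a = \<one>" using assms(3) by blast
  then show "inv a \<in> H" using assms(1) \<open>a \<in> H\<close> by (metis inv_equality subsetD)
qed (use assms in auto)

lemma Dgrp_eq_units_of:
  "Dgrp A B dF = units_of \<lparr>carrier = UNIV, monoid.mult = dmul (of_rat A) (of_rat B) (of_nat dF), one = done_D\<rparr>"
  by (auto simp: Dgrp_def units_of_def Units_def Dunits_def)

lemma group_Dgrp: "group (Dgrp A B dF)"
  unfolding Dgrp_eq_units_of by (rule monoid.units_group, rule monoidI) (simp_all add: dmul_assoc)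

lemma Gm_eq_units_of: "Gm = units_of \<lparr>carrier = UNIV, monoid.mult = (*), one = 1 :: 'k::field_char_0\<rparr>"
  by (auto simp: Gm_def units_of_def Units_def) (metis left_inverse right_inverse)

lemma group_Gm: "group (Gm :: 'k::field_char_0 monoid)"
  unfolding Gm_eq_units_of by (rule monoid.units_group) (auto intro!: monoidI)

lemma group_Hpre: "group (Hpre A B dF)"
  unfolding Hpre_def by (rule DirProd_group[OF group_Dgrp group_Gm])

lemma NEK_mult_scalar:
  assumes "NEK A B dF y = felt s 0"
  shows "NEK A B dF (dmul (of_rat A) (of_rat B) (of_nat dF) x y) = dsmul s (NEK A B dF x)"
proof -
  let ?M = "dmul (of_rat A) (of_rat B) (of_nat dF)"
  have "NEK A B dF (?M x y) = ?M x (?M (NEK A B dF y) (dstar (dbar x)))"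
    unfolding NEK_def by (simp add: dbar_dmul dstar_dmul dmul_assoc)
  then show ?thesis
    unfolding assms dmul_felt_scalar dmul_dsmul_right by (simp add: NEK_def)
qed

lemma rho_one: "rho A B dF (a, \<alpha>) done_D = dsmul (inverse \<alpha>) (NEK A B dF a)"
  by (simp add: NEK_def)

lemma rho_fixes_iff_commute:
  fixes \<alpha> :: "'k::field_char_0"
  assumes "NEK A B dF a = felt \<alpha> 0" "\<alpha> \<noteq> 0" "a \<in> Dunits A B dF"
  shows "rho A B dF (a, \<alpha>) x = x \<longleftrightarrow>
         dmul (of_rat A) (of_rat B) (of_nat dF) a x = dmul (of_rat A) (of_rat B) (of_nat dF) x a"
proof -
  let ?M = "dmul (of_rat A) (of_rat B) (of_nat dF)"
  obtain a' where a': "?M a a' = done_D" "?M a' a = done_D"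
    using assms(3) by (auto simp: Dunits_def)
  have "dstar (dbar a) = ?M (?M a' a) (dstar (dbar a))" by (simp add: a')
  also have "\<dots> = ?M a' (felt \<alpha> 0)" using assms(1) by (simp add: dmul_assoc NEK_def)
  finally have "dstar (dbar a) = dsmul \<alpha> a'" by (simp add: dmul_felt_scalar flip: felt_commute)
  then have rho: "rho A B dF (a, \<alpha>) x = ?M (?M a x) a'"
    using assms(2) by (simp add: dmul_dsmul_right dmul_assoc)
  show ?thesis
  proof
    assume "rho A B dF (a, \<alpha>) x = x"
    then have conj: "?M (?M a x) a' = x" unfolding rho .
    have "?M a x = ?M (?M (?M a x) a') a" by (simp add: dmul_assoc a')
    then show "?M a x = ?M x a" unfolding conj .
  qed (simp only: rho, simp add: dmul_assoc a')
qed

lemma qmap_qmul: "qmap (qmul A B p q) = qmul (of_rat A) (of_rat B) (qmap p) (qmap q)"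
  by (cases p, cases q) (simp add: of_rat_add of_rat_diff of_rat_mult)

lemma qmap_qscal: "qmap (qscal c) = qscal (of_rat c)"
  by (simp add: qscal_def)

lemma qcoef0_fst_felt [simp]: "qcoef0 (fst (felt x y)) = x"
  by (simp add: felt_def qscal_def)

lemma felt_in_Funits: "x^2 - of_nat dF * y^2 \<noteq> 0 \<Longrightarrow> felt x y \<in> Funits dF"
  by (auto simp: Funits_def)

definition norm_pair :: "rat \<Rightarrow> rat \<Rightarrow> nat \<Rightarrow> 'k::field_char_0 delt \<Rightarrow> 'k delt \<times> 'k" where
  "norm_pair A B dF e = (e, qcoef0 (fst (NEK A B dF e)))"

text \<open>Definiteness of \<open>D\<^sub>0\<close> is used only through \<open>A, B \<noteq> 0\<close>.\<close>

locale quaternion_embedding =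
  fixes A B :: rat and dF dM :: nat and mu :: "rat quat"
  assumes A_nonzero: "A \<noteq> 0" and B_nonzero: "B \<noteq> 0"
    and dF_pos: "dF > 0" and dM_pos: "dM > 0"
    and mu_square: "qmul A B mu mu = qscal (- of_nat dM)"
begin

abbreviation Dmul :: "'k::field_char_0 delt \<Rightarrow> 'k delt \<Rightarrow> 'k delt" where
  "Dmul \<equiv> dmul (of_rat A) (of_rat B) (of_nat dF)"

lemma mu_pure: "qcoef0 mu = 0"
proof (rule ccontr)
  obtain x0 x1 x2 x3 where mu: "mu = Q x0 x1 x2 x3" by (cases mu)
  assume "qcoef0 mu \<noteq> 0"
  then have "x0 \<noteq> 0" by (simp add: mu)
  with mu_square have "x1 = 0" "x2 = 0" "x3 = 0"
    by (auto simp: mu qscal_def)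
  with mu_square have "x0 * x0 = - of_nat dM"
    by (simp add: mu qscal_def)
  moreover have "x0 * x0 \<ge> 0" by simp
  ultimately show False using dM_pos by simp
qed

lemma qmap_mu_pure: "qcoef0 (qmap mu :: 'k::field_char_0 quat) = 0"
  using mu_pure by (cases mu) simp

lemma qmap_mu_square:
  "qmul (of_rat A) (of_rat B) (qmap mu) (qmap mu) = (qscal (- of_nat dM) :: 'k::field_char_0 quat)"
  using arg_cong[OF mu_square, of qmap] by (simp add: qmap_qmul qmap_qscal of_rat_minus)

lemma qmap_mu_nonzero: "(qmap mu :: 'k::field_char_0 quat) \<noteq> qscal 0"
proof
  assume "(qmap mu :: 'k quat) = qscal 0"
  then have "qmul (of_rat A) (of_rat B) (qmap mu) (qmap mu) = (qscal 0 :: 'k quat)"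
    by (simp add: qscal_def)
  then have "(qscal (- of_nat dM) :: 'k quat) = qscal 0" by (simp only: qmap_mu_square)
  then show False using dM_pos by (simp add: qscal_def)
qed

lemmas eelt_mult_E = eelt_mult[OF qmap_mu_pure qmap_mu_square]
lemmas eelt_commute_E = eelt_commute[OF qmap_mu_pure qmap_mu_square]
lemmas eelt_eq_iff_E = eelt_eq_iff[OF qmap_mu_pure qmap_mu_nonzero]
lemmas felt_eq_eelt_E = felt_eq_eelt[OF qmap_mu_pure]

lemma Eset_eq: "Eset dF mu = {eelt (qmap mu) x y z w | x y z w. True}"
  by (simp add: Eset_def eelt_def)

lemma NEK_eelt:
  "NEK A B dF (eelt (qmap mu) x y z w) =
     eelt (qmap mu) (x^2 + of_nat dM*y^2 - of_nat dF*(z^2 + of_nat dM*w^2)) 0 0 (2*(x*w - y*z))"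
  unfolding NEK_def by (rule eelt_mult_dstar_dbar[OF qmap_mu_pure qmap_mu_square])

lemma NEK_eelt_eq_felt:
  "NEK A B dF (eelt (qmap mu) x y z w) = felt t 0 \<longleftrightarrow>
     t = x^2 + of_nat dM*y^2 - of_nat dF*(z^2 + of_nat dM*w^2) \<and> x*w = y*z"
  unfolding NEK_eelt felt_eq_eelt_E eelt_eq_iff_E by auto

lemma NEK_felt: "NEK A B dF (felt x y) = felt (x^2 - of_nat dF * y^2) 0"
  unfolding felt_eq_eelt_E[of x y] by (simp add: NEK_eelt_eq_felt)

lemma Eset_inverse:
  assumes "e \<in> Eset dF mu" "NEK A B dF e = felt t 0" "t \<noteq> 0"
  defines "e' \<equiv> dsmul (inverse t) (dstar (dbar e))"
  shows "e' \<in> Eset dF mu" "NEK A B dF e' = felt (inverse t) 0"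
    and "Dmul e e' = done_D" "Dmul e' e = done_D"
proof -
  obtain x y z w where e: "e = eelt (qmap mu) x y z w" using assms(1) by (auto simp: Eset_eq)
  have t: "t = x^2 + of_nat dM*y^2 - of_nat dF*(z^2 + of_nat dM*w^2)" "x*w = y*z"
    using assms(2) unfolding e NEK_eelt_eq_felt by auto
  have e': "e' = eelt (qmap mu) (inverse t * x) (inverse t * - y) (inverse t * - z) (inverse t * w)"
    unfolding e'_def e dbar_eelt[OF qmap_mu_pure] dstar_eelt[OF qmap_mu_pure] dsmul_eelt[OF qmap_mu_pure]
    by simp
  show "e' \<in> Eset dF mu" unfolding e' Eset_eq by blast
  have "(inverse t * x)^2 + of_nat dM*(inverse t * - y)^2 - of_nat dF*((inverse t * - z)^2 + of_nat dM*(inverse t * w)^2)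
      = inverse t ^ 2 * t"
    unfolding t(1) by (simp add: algebra_simps power2_eq_square)
  then show "NEK A B dF e' = felt (inverse t) 0"
    unfolding e' NEK_eelt_eq_felt using assms(3) t(2) by (simp add: power2_eq_square algebra_simps)
  show 1: "Dmul e e' = done_D"
    unfolding e'_def dmul_dsmul_right NEK_def[symmetric] assms(2)
    using assms(3) by (simp add: dsmul_felt felt_one)
  show "Dmul e' e = done_D"
    using 1 unfolding e' e eelt_commute_E .
qed

lemma E0units_iff: "e \<in> E0units A B dF mu \<longleftrightarrow> e \<in> Eset dF mu \<and> (\<exists>t. t \<noteq> 0 \<and> NEK A B dF e = felt t 0)"
proof
  assume "e \<in> Eset dF mu \<and> (\<exists>t. t \<noteq> 0 \<and> NEK A B dF e = felt t 0)"
  then obtain t where "e \<in> Eset dF mu" "NEK A B dF e = felt t 0" "t \<noteq> 0" by blast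
  from this Eset_inverse[OF this] show "e \<in> E0units A B dF mu"
    unfolding E0units_def by blast
qed (simp add: E0units_def)

lemma E0units_NEK:
  assumes "e \<in> E0units A B dF mu"
  shows "NEK A B dF e = felt (snd (norm_pair A B dF e)) 0" "snd (norm_pair A B dF e) \<noteq> 0"
  using assms by (auto simp: E0units_iff norm_pair_def)

lemma E0units_Dunits: "e \<in> E0units A B dF mu \<Longrightarrow> e \<in> Dunits A B dF"
  by (auto simp: E0units_def Dunits_def)

lemma E0units_mult:
  assumes "e1 \<in> E0units A B dF mu" "e2 \<in> E0units A B dF mu"
  shows "Dmul e1 e2 \<in> E0units A B dF mu"
proof -
  obtain t1 t2 where t: "t1 \<noteq> 0" "NEK A B dF e1 = felt t1 0" "t2 \<noteq> 0" "NEK A B dF e2 = felt t2 0"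
    using assms by (auto simp: E0units_iff)
  have "Dmul e1 e2 \<in> Eset dF mu"
    using assms unfolding E0units_iff Eset_eq by (auto simp: eelt_mult_E) blast
  moreover have "NEK A B dF (Dmul e1 e2) = felt (t2 * t1) 0"
    using NEK_mult_scalar[OF t(4)] t(2) by (simp add: dsmul_felt)
  ultimately show ?thesis using t by (auto simp: E0units_iff)
qed

lemma done_in_E0units: "(done_D :: 'k::field_char_0 delt) \<in> E0units A B dF mu"
proof -
  have "(done_D :: 'k delt) \<in> Eset dF mu"
    unfolding Eset_eq felt_one[symmetric] felt_eq_eelt_E by blast
  moreover have "NEK A B dF (done_D :: 'k delt) = felt 1 0"
    by (simp add: NEK_felt flip: felt_one)
  ultimately show ?thesis by (auto simp: E0units_iff)
qed

lemma group_E0grp: "group (E0grp A B dF mu)"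
proof (rule groupI)
  fix e :: "'k::field_char_0 delt" assume "e \<in> carrier (E0grp A B dF mu)"
  then obtain t where "e \<in> Eset dF mu" "NEK A B dF e = felt t 0" "t \<noteq> 0"
    by (auto simp: E0grp_def E0units_iff)
  note e' = Eset_inverse[OF this]
  have "dsmul (inverse t) (dstar (dbar e)) \<in> E0units A B dF mu"
    using e'(1,2) \<open>t \<noteq> 0\<close> by (auto simp: E0units_iff)
  with e'(4) show "\<exists>e' \<in> carrier (E0grp A B dF mu). e' \<otimes>\<^bsub>E0grp A B dF mu\<^esub> e = \<one>\<^bsub>E0grp A B dF mu\<^esub>"
    by (auto simp: E0grp_def)
qed (simp_all add: E0grp_def E0units_mult done_in_E0units dmul_assoc)

lemma norm_pair_hom: "norm_pair A B dF \<in> hom (E0grp A B dF mu) (Hpre A B dF)"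
proof (rule homI)
  fix e :: "'k::field_char_0 delt" assume "e \<in> carrier (E0grp A B dF mu)"
  then show "norm_pair A B dF e \<in> carrier (Hpre A B dF)"
    using E0units_NEK[of e] E0units_Dunits[of e]
    by (auto simp: E0grp_def Hpre_def Dgrp_def Gm_def norm_pair_def)
next
  fix e1 e2 :: "'k::field_char_0 delt"
  assume "e1 \<in> carrier (E0grp A B dF mu)" "e2 \<in> carrier (E0grp A B dF mu)"
  then have "NEK A B dF e1 = felt (snd (norm_pair A B dF e1)) 0"
    and "NEK A B dF e2 = felt (snd (norm_pair A B dF e2)) 0"
    by (simp_all add: E0grp_def E0units_NEK)
  then have "NEK A B dF (Dmul e1 e2) = felt (snd (norm_pair A B dF e2) * snd (norm_pair A B dF e1)) 0"
    by (simp add: NEK_mult_scalar dsmul_felt)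
  then show "norm_pair A B dF (e1 \<otimes>\<^bsub>E0grp A B dF mu\<^esub> e2)
      = norm_pair A B dF e1 \<otimes>\<^bsub>Hpre A B dF\<^esub> norm_pair A B dF e2"
    by (simp add: E0grp_def Hpre_def Dgrp_def Gm_def norm_pair_def)
qed

lemma Funits_subset_E0units: "Funits dF \<subseteq> E0units A B dF mu"
proof
  fix f :: "'k::field_char_0 delt" assume "f \<in> Funits dF"
  then obtain x y where f: "f = felt x y" "x^2 - of_nat dF * y^2 \<noteq> 0"
    by (auto simp: Funits_def)
  have "f \<in> Eset dF mu" unfolding f felt_eq_eelt_E Eset_eq by blast
  then show "f \<in> E0units A B dF mu"
    using f by (auto simp: E0units_iff NEK_felt)
qed

lemma subgroup_Funits: "subgroup (Funits dF) (E0grp A B dF mu)"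
proof (rule group.subgroup_by_inverse_witness[OF group_E0grp])
  show "Funits dF \<subseteq> carrier (E0grp A B dF mu)"
    using Funits_subset_E0units by (simp add: E0grp_def)
  show "Funits dF \<noteq> {}"
    using felt_in_Funits[of 1 dF 0] by auto
next
  fix f :: "'k::field_char_0 delt" assume "f \<in> Funits dF"
  then obtain x y :: 'k where f: "f = felt x y" and n: "x^2 - of_nat dF * y^2 \<noteq> 0"
    by (auto simp: Funits_def)
  define n where "n = x^2 - of_nat dF * y^2"
  have "(x/n)^2 - of_nat dF * (-y/n)^2 = n / n^2"
    by (simp add: n_def power_divide diff_divide_distrib)
  then have "felt (x/n) (-y/n) \<in> Funits dF"
    using n by (intro felt_in_Funits) (simp add: n_def power2_eq_square)
  moreover have "x/n*x + of_nat dF*(-y/n)*y = (x^2 - of_nat dF*y^2) / n"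
    by (simp add: power2_eq_square diff_divide_distrib)
  then have "x/n*x + of_nat dF*(-y/n)*y = 1" "x/n*y + (-y/n)*x = 0"
    using n by (simp_all add: n_def)
  then have "Dmul (felt (x/n) (-y/n)) f = done_D"
    by (simp only: f felt_mult felt_one)
  ultimately show "\<exists>f' \<in> Funits dF. f' \<otimes>\<^bsub>E0grp A B dF mu\<^esub> f = \<one>\<^bsub>E0grp A B dF mu\<^esub>"
    by (auto simp: E0grp_def)
next
  fix f g :: "'k::field_char_0 delt" assume "f \<in> Funits dF" "g \<in> Funits dF"
  then obtain x y x' y' :: 'k where f: "f = felt x y" "x^2 - of_nat dF * y^2 \<noteq> 0"
    and g: "g = felt x' y'" "x'^2 - of_nat dF * y'^2 \<noteq> 0"
    by (auto simp: Funits_def)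
  have "felt (x*x' + of_nat dF*y*y') (x*y' + y*x') \<in> Funits dF"
    using f(2) g(2) by (intro felt_in_Funits) (simp add: brahmagupta_identity)
  then show "f \<otimes>\<^bsub>E0grp A B dF mu\<^esub> g \<in> Funits dF"
    by (simp add: f g E0grp_def felt_mult)
qed

lemma Hsub_eq_image: "Hsub dF = norm_pair A B dF ` Funits dF"
  by (auto simp: Hsub_def Funits_def norm_pair_def NEK_felt image_iff)

lemma normal_Hsub: "Hsub dF \<lhd> (Hpre A B dF :: ('k::field_char_0 delt \<times> 'k) monoid)"
proof -
  interpret Hpre: group "Hpre A B dF :: ('k::field_char_0 delt \<times> 'k) monoid"
    by (rule group_Hpre)
  interpret norm_pair: group_hom "E0grp A B dF mu" "Hpre A B dF" "norm_pair A B dF"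
    by (simp add: group_hom_def group_hom_axioms_def group_E0grp group_Hpre norm_pair_hom)
  have sub: "subgroup (Hsub dF) (Hpre A B dF)"
    unfolding Hsub_eq_image by (rule norm_pair.subgroup_img_is_subgroup[OF subgroup_Funits])
  have central: "g \<otimes>\<^bsub>Hpre A B dF\<^esub> h = h \<otimes>\<^bsub>Hpre A B dF\<^esub> g" if "h \<in> Hsub dF"
    for g h :: "'k delt \<times> 'k"
  proof -
    from that obtain x y where h: "h = (felt x y, x^2 - of_nat dF * y^2)"
      unfolding Hsub_def by blast
    obtain a \<alpha> where g: "g = (a, \<alpha>)" by (cases g)
    show ?thesis
      by (simp add: h g Hpre_def Dgrp_def Gm_def felt_commute[of _ _ _ x y a] mult.commute)
  qed
  show ?thesis
  proof (rule Hpre.normal_invI[OF sub])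
    fix g h :: "'k delt \<times> 'k"
    assume g: "g \<in> carrier (Hpre A B dF)" and h: "h \<in> Hsub dF"
    have "h \<in> carrier (Hpre A B dF)" using h Hpre.subgroupE(1)[OF sub] by blast
    with g have "g \<otimes>\<^bsub>Hpre A B dF\<^esub> h \<otimes>\<^bsub>Hpre A B dF\<^esub> inv\<^bsub>Hpre A B dF\<^esub> g = h"
      unfolding central[OF h] by (simp add: Hpre.m_assoc)
    with h show "g \<otimes>\<^bsub>Hpre A B dF\<^esub> h \<otimes>\<^bsub>Hpre A B dF\<^esub> inv\<^bsub>Hpre A B dF\<^esub> g \<in> Hsub dF"
      by simp
  qed
qed

lemma group_Hgrp: "group (Hgrp A B dF)"
  unfolding Hgrp_def by (rule normal.factorgroup_is_group[OF normal_Hsub])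

lemma phiH_eq: "phiH A B dF e = Hsub dF #>\<^bsub>Hpre A B dF\<^esub> norm_pair A B dF e"
  by (simp add: phiH_def norm_pair_def)

lemma phiH_hom: "phiH A B dF \<in> hom (E0grp A B dF mu) (Hgrp A B dF)"
proof -
  have "phiH A B dF = (\<lambda>a. Hsub dF #>\<^bsub>Hpre A B dF\<^esub> a) \<circ> norm_pair A B dF"
    by (simp add: fun_eq_iff phiH_eq)
  then show ?thesis
    unfolding Hgrp_def by (metis hom_compose norm_pair_hom normal.r_coset_hom_Mod normal_Hsub)
qed

lemma kernel_phiH:
  "kernel (E0grp A B dF mu) (Hzgrp A B dF dM mu) (phiH A B dF) = (Funits dF :: 'k::field_char_0 delt set)"
proof -
  interpret Hpre: group "Hpre A B dF :: ('k::field_char_0 delt \<times> 'k) monoid"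
    by (rule group_Hpre)
  have Hsub: "subgroup (Hsub dF) (Hpre A B dF)"
    using normal_Hsub normal_imp_subgroup by blast
  have "phiH A B dF e = Hsub dF \<longleftrightarrow> e \<in> Funits dF" if "e \<in> E0units A B dF mu" for e :: "'k delt"
  proof -
    have "norm_pair A B dF e \<in> carrier (Hpre A B dF)"
      using norm_pair_hom that by (auto simp: hom_def E0grp_def)
    then have "phiH A B dF e = Hsub dF \<longleftrightarrow> norm_pair A B dF e \<in> Hsub dF"
      using Hpre.rcos_self[OF _ Hsub] Hpre.coset_join2[OF _ Hsub] by (metis phiH_eq)
    also have "\<dots> \<longleftrightarrow> e \<in> Funits dF"
      by (auto simp: Hsub_eq_image norm_pair_def)
    finally show ?thesis .
  qed
  then show ?thesis
    using Funits_subset_E0units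
    by (auto simp: kernel_def E0grp_def Hzgrp_def Hgrp_def)
qed

section \<open>The stabilizer of \<open>z\<close>\<close>

lemma iota_delta_eelt:
  obtains c c' :: "'k::field_char_0" where "c' \<noteq> 0" "iota_delta dM dF mu = eelt (qmap mu) c 0 0 c'"
proof -
  obtain m1 m2 m3 where mu: "(qmap mu :: 'k quat) = Q 0 m1 m2 m3"
    using qmap_mu_pure by (rule pure_quat_cases)
  define g where "g = inverse (of_nat (gK dM dF) :: 'k)"
  have g: "g \<noteq> 0" using dM_pos by (simp add: g_def gK_def)
  show ?thesis
  proof (cases "- int (dK dM dF) mod 4 = 1")
    case True
    then have "iota_delta dM dF mu = eelt (qmap mu) (1/2) 0 0 (g/2)"
      unfolding iota_delta_def Let_def mu eelt_pure g_def by (simp add: qscal_def)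
    from that[OF _ this] g show ?thesis by simp
  next
    case False
    then have "iota_delta dM dF mu = eelt (qmap mu) 0 0 0 g"
      unfolding iota_delta_def Let_def mu eelt_pure g_def by (simp add: qscal_def)
    from that[OF _ this] g show ?thesis by simp
  qed
qed

lemma norm_pair_stabilizes_z:
  assumes "(e :: 'k::field_char_0 delt) \<in> E0units A B dF mu"
  shows "nu A B dF (norm_pair A B dF e) = 1"
    and "rho A B dF (norm_pair A B dF e) done_D = done_D"
    and "rho A B dF (norm_pair A B dF e) (iota_delta dM dF mu) = iota_delta dM dF mu"
proof -
  obtain t where pair: "norm_pair A B dF e = (e, t)" and N: "NEK A B dF e = felt t 0" and "t \<noteq> 0"
    using E0units_NEK[OF assms] by (metis norm_pair_def prod.collapse snd_conv)
  obtain x y z w where e: "e = eelt (qmap mu) x y z w"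
    using assms by (auto simp: E0units_iff Eset_eq)
  have "t = x^2 + of_nat dM*y^2 - of_nat dF*(z^2 + of_nat dM*w^2)" "x*w = y*z"
    using N unfolding e NEK_eelt_eq_felt by auto
  then have "fnorm (of_nat dF) (Dmul e (dstar e)) = t^2"
    unfolding e fnorm_eelt_mult_dstar[OF qmap_mu_pure qmap_mu_square] by simp
  then show "nu A B dF (norm_pair A B dF e) = 1"
    using \<open>t \<noteq> 0\<close> by (simp add: pair)
  show "rho A B dF (norm_pair A B dF e) done_D = done_D"
    unfolding pair rho_one N using \<open>t \<noteq> 0\<close> by (simp add: dsmul_felt felt_one)
  obtain c c' :: 'k where "c' \<noteq> 0" and z: "iota_delta dM dF mu = eelt (qmap mu) c 0 0 c'"
    by (rule iota_delta_eelt)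
  show "rho A B dF (norm_pair A B dF e) (iota_delta dM dF mu) = iota_delta dM dF mu"
    unfolding pair rho_fixes_iff_commute[OF N \<open>t \<noteq> 0\<close> E0units_Dunits[OF assms]]
    unfolding z e by (rule eelt_commute_E)
qed

lemma stabilizer_z_in_E0units:
  fixes \<alpha> :: "'k::field_char_0"
  assumes "(a, \<alpha>) \<in> carrier (Hpre A B dF)"
    and "rho A B dF (a, \<alpha>) done_D = done_D"
    and "rho A B dF (a, \<alpha>) (iota_delta dM dF mu) = iota_delta dM dF mu"
  shows "a \<in> E0units A B dF mu" "norm_pair A B dF a = (a, \<alpha>)"
proof -
  have a: "a \<in> Dunits A B dF" "\<alpha> \<noteq> 0"
    using assms(1) by (auto simp: Hpre_def Dgrp_def Gm_def)
  have "NEK A B dF a = dsmul \<alpha> (dsmul (inverse \<alpha>) (NEK A B dF a))"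
    using a(2) by simp
  also have "\<dots> = felt \<alpha> 0"
    using assms(2) unfolding rho_one by (simp add: dsmul_felt flip: felt_one)
  finally have N: "NEK A B dF a = felt \<alpha> 0" .
  obtain c c' :: 'k where c': "c' \<noteq> 0" and z: "iota_delta dM dF mu = eelt (qmap mu) c 0 0 c'"
    by (rule iota_delta_eelt)
  have "Dmul a (eelt (qmap mu) c 0 0 c') = Dmul (eelt (qmap mu) c 0 0 c') a"
    using assms(3) unfolding rho_fixes_iff_commute[OF N a(2,1)] z .
  moreover have "(of_rat A :: 'k) \<noteq> 0" "(of_rat B :: 'k) \<noteq> 0" "(of_nat dF :: 'k) \<noteq> 0"
    using A_nonzero B_nonzero dF_pos by simp_all
  ultimately obtain x y z w where "a = eelt (qmap mu) x y z w"
    using eelt_centralizer[OF _ _ _ c' qmap_mu_pure qmap_mu_nonzero] by blast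
  then have "a \<in> Eset dF mu" unfolding Eset_eq by blast
  then show "a \<in> E0units A B dF mu" using N a(2) by (auto simp: E0units_iff)
  show "norm_pair A B dF a = (a, \<alpha>)" by (simp add: norm_pair_def N)
qed

lemma image_phiH: "phiH A B dF ` E0units A B dF mu = (Hz A B dF dM mu :: ('k::field_char_0 delt \<times> 'k) set set)"
proof (rule equalityI)
  interpret Hpre: group "Hpre A B dF :: ('k delt \<times> 'k) monoid"
    by (rule group_Hpre)
  show "phiH A B dF ` E0units A B dF mu \<subseteq> (Hz A B dF dM mu :: ('k delt \<times> 'k) set set)"
  proof
    fix C assume "C \<in> phiH A B dF ` E0units A B dF mu"
    then obtain e where e: "e \<in> E0units A B dF mu" and C: "C = phiH A B dF e" by blast
    have "C \<in> carrier (Hgrp A B dF)"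
      using phiH_hom e C by (auto simp: hom_def E0grp_def)
    moreover have "nu A B dF h = 1 \<and> rho A B dF h done_D = done_D
        \<and> rho A B dF h (iota_delta dM dF mu) = iota_delta dM dF mu" if "h \<in> C" for h
    proof -
      from that obtain f where f: "f \<in> Funits dF"
        and h: "h = norm_pair A B dF f \<otimes>\<^bsub>Hpre A B dF\<^esub> norm_pair A B dF e"
        unfolding C phiH_eq r_coset_def Hsub_eq_image by blast
      have "f \<in> E0units A B dF mu" using f Funits_subset_E0units by blast
      then have fe: "Dmul f e \<in> E0units A B dF mu" using e by (rule E0units_mult)
      have "h = norm_pair A B dF (Dmul f e)"
        using hom_mult[OF norm_pair_hom, of f e] \<open>f \<in> E0units A B dF mu\<close> e
        unfolding h by (simp add: E0grp_def)
      then show ?thesis using norm_pair_stabilizes_z[OF fe] by simp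
    qed
    ultimately show "C \<in> Hz A B dF dM mu" unfolding Hz_def by blast
  qed
  show "(Hz A B dF dM mu :: ('k delt \<times> 'k) set set) \<subseteq> phiH A B dF ` E0units A B dF mu"
  proof
    fix C :: "('k delt \<times> 'k) set" assume "C \<in> Hz A B dF dM mu"
    then have "C \<in> carrier (Hgrp A B dF)"
      and stab: "\<And>h. h \<in> C \<Longrightarrow> rho A B dF h done_D = done_D
                   \<and> rho A B dF h (iota_delta dM dF mu) = iota_delta dM dF mu"
      unfolding Hz_def by blast+
    then obtain a \<alpha> where g: "(a, \<alpha>) \<in> carrier (Hpre A B dF)" and C: "C = Hsub dF #>\<^bsub>Hpre A B dF\<^esub> (a, \<alpha>)"
      by (auto simp: Hgrp_def FactGroup_def RCOSETS_def)
    have "(a, \<alpha>) \<in> C"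
      unfolding C by (rule Hpre.rcos_self[OF g normal_imp_subgroup[OF normal_Hsub]])
    note a = stabilizer_z_in_E0units[OF g conjunct1[OF stab[OF this]] conjunct2[OF stab[OF this]]]
    have "C = phiH A B dF a" unfolding C phiH_eq a(2) ..
    with a(1) show "C \<in> phiH A B dF ` E0units A B dF mu" by blast
  qed
qed

theorem E0grp_Mod_Funits_iso_Hzgrp:
  "(\<lambda>X. the_elem (phiH A B dF ` X))
     \<in> iso (E0grp A B dF mu Mod (Funits dF :: 'k::field_char_0 delt set)) (Hzgrp A B dF dM mu)"
proof -
  interpret phiH: group_hom "E0grp A B dF mu" "Hgrp A B dF :: ('k delt \<times> 'k) set monoid" "phiH A B dF"
    by (simp add: group_hom_def group_hom_axioms_def group_E0grp group_Hgrp phiH_hom)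
  have "group_hom (E0grp A B dF mu) (Hzgrp A B dF dM mu :: ('k delt \<times> 'k) set monoid) (phiH A B dF)"
    using phiH.induced_group_hom[OF phiH.G.subgroup_self]
    by (simp add: E0grp_def Hzgrp_def image_phiH)
  then have "(\<lambda>X. the_elem (phiH A B dF ` X))
      \<in> iso (E0grp A B dF mu Mod kernel (E0grp A B dF mu) (Hzgrp A B dF dM mu) (phiH A B dF))
            (Hzgrp A B dF dM mu :: ('k delt \<times> 'k) set monoid)"
    by (rule group_hom.FactGroup_iso_set) (simp add: E0grp_def Hzgrp_def image_phiH)
  then show ?thesis unfolding kernel_phiH .
qed

end


theorem lemma4p1:
  fixes A B :: rat and dF dM :: nat and mu :: "rat quat"
  assumes definite: "A < 0" "B < 0"
    and dF: "dF > 0" "squarefree dF"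
    and dM: "dM > 0" "squarefree dM"
    and iota: "qmul A B mu mu = qscal (- of_nat dM)"
  shows "(\<lambda>X. the_elem (phiH A B dF ` X))
           \<in> iso (E0grp A B dF mu Mod (Funits dF :: 'k::field_char_0 delt set))
                 (Hzgrp A B dF dM mu)"
proof -
  interpret quaternion_embedding A B dF dM mu
    using definite dF(1) dM(1) iota by unfold_locales simp_all
  show ?thesis by (rule E0grp_Mod_Funits_iso_Hzgrp)
qed

end
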